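(* Let $k>1$, let $f$ be a positive function, differentiable on $[0,1]$, and define $g(R)=\dfrac{k-1}{\frac{k-1}{k}-R}$ for $R\neq\frac{k-1}{k}$. Consider the planar system $$\frac{dI}{d\tau}=I\,[f(R)(1-I-R)-k],\qquad \frac{dR}{d\tau}=(k-1)I-R,$$ and let $(I^*,R^* )$ be an endemic equilibrium point of it. If $$\frac{df}{dR}(R^* )<\frac{dg}{dR}(R^* )\quad\left(\text{equivalently } <\tfrac{1}{k-1}g^2(R^* ),\ \text{equivalently } <\tfrac{1}{k-1}f^2(R^* )\right),$$ then $(I^*,R^* )$ is a locally stable equilibrium point. If $$\frac{df}{dR}(R^* )>\frac{dg}{dR}(R^* )\quad\left(\text{equivalently } >\tfrac{1}{k-1}g^2(R^* ),\ \text{equivalently } >\tfrac{1}{k-1}f^2(R^* )\right),$$ then $(I^*,R^* )$ is a local saddle point.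
   Context: An endemic equilibrium is an equilibrium point $(I^*,R^* )$ of the system with $I^*>0$. "Locally stable" means locally asymptotically stable (both eigenvalues of the Jacobian at the point have negative real part); "saddle" means the Jacobian at the point has one positive and one negative real eigenvalue. *)

theory Defs
  imports "HOL-Analysis.Analysis"
begin

text \<open>Planar autonomous system  x' = P x y, y' = Q x y.
  Jacobian matrix at (x,y), built from the partial derivatives.\<close>
definition jac2 :: "(real \<Rightarrow> real \<Rightarrow> real) \<Rightarrow> (real \<Rightarrow> real \<Rightarrow> real) \<Rightarrow> real \<Rightarrow> real \<Rightarrow> real^2^2" where
  "jac2 P Q x y =
     vector [vector [deriv (\<lambda>s. P s y) x, deriv (\<lambda>s. P x s) y],
             vector [deriv (\<lambda>s. Q s y) x, deriv (\<lambda>s. Q x s) y]]"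

definition is_eigenvalue2 :: "real^2^2 \<Rightarrow> complex \<Rightarrow> bool" where
  "is_eigenvalue2 A \<mu> \<longleftrightarrow>
     (\<exists>v :: complex^2. v \<noteq> 0 \<and> (\<chi> i j. complex_of_real (A $ i $ j)) *v v = \<mu> *s v)"

definition is_equilibrium :: "(real \<Rightarrow> real \<Rightarrow> real) \<Rightarrow> (real \<Rightarrow> real \<Rightarrow> real) \<Rightarrow> real \<Rightarrow> real \<Rightarrow> bool" where
  "is_equilibrium P Q x y \<longleftrightarrow> P x y = 0 \<and> Q x y = 0"

definition locally_stable :: "(real \<Rightarrow> real \<Rightarrow> real) \<Rightarrow> (real \<Rightarrow> real \<Rightarrow> real) \<Rightarrow> real \<Rightarrow> real \<Rightarrow> bool" where
  "locally_stable P Q x y \<longleftrightarrow> is_equilibrium P Q x y \<and>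
     (\<forall>\<mu>. is_eigenvalue2 (jac2 P Q x y) \<mu> \<longrightarrow> Re \<mu> < 0)"

definition saddle :: "(real \<Rightarrow> real \<Rightarrow> real) \<Rightarrow> (real \<Rightarrow> real \<Rightarrow> real) \<Rightarrow> real \<Rightarrow> real \<Rightarrow> bool" where
  "saddle P Q x y \<longleftrightarrow> is_equilibrium P Q x y \<and>
     (\<exists>\<mu>1 \<mu>2 :: real. \<mu>1 > 0 \<and> \<mu>2 < 0 \<and>
        is_eigenvalue2 (jac2 P Q x y) (complex_of_real \<mu>1) \<and>
        is_eigenvalue2 (jac2 P Q x y) (complex_of_real \<mu>2))"

end

theory Submission
  imports Defs
begin

text \<open>For a real 2x2 matrix the eigenvalues are the roots of
  \<open>\<mu>\<^sup>2 - trace \<cdot> \<mu> + det\<close>, so a negative trace and a positive determinant force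
  both real parts to be negative, while a negative determinant gives two real
  eigenvalues of opposite sign. At an endemic equilibrium the relation
  \<open>f(R\<^sup>*)(1 - I\<^sup>* - R\<^sup>*) = k\<close> makes the trace of the Jacobian \<open>-I\<^sup>* f(R\<^sup>*) - 1 < 0\<close>
  and its determinant \<open>(I\<^sup>* k / f(R\<^sup>*)) (f(R\<^sup>*)\<^sup>2 - (k - 1) f'(R\<^sup>*))\<close>; together with
  \<open>R\<^sup>* = (k - 1) I\<^sup>*\<close> it also gives \<open>(k - 1)/k - R\<^sup>* = (k - 1)/f(R\<^sup>*)\<close>, i.e.
  \<open>g'(R\<^sup>*) = f(R\<^sup>*)\<^sup>2/(k - 1)\<close>. Hence the sign of the determinant is the sign of
  \<open>g'(R\<^sup>*) - f'(R\<^sup>*)\<close>.\<close>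

lemma matrix_vector_mul_mat: "mat c *v v = c *s v"
  by (simp add: vec_eq_iff matrix_vector_mult_def mat_def if_distrib [of "\<lambda>x. x * _"]
      cong: if_cong)

lemma is_eigenvalue2_iff_char_poly:
  "is_eigenvalue2 A \<mu> \<longleftrightarrow> \<mu>^2 - of_real (trace A) * \<mu> + of_real (det A) = 0"
proof -
  define M :: "complex^2^2" where "M = (\<chi> i j. complex_of_real (A $ i $ j))"
  have "is_eigenvalue2 A \<mu> \<longleftrightarrow> (\<exists>v. v \<noteq> 0 \<and> (M - mat \<mu>) *v v = 0)"
    unfolding is_eigenvalue2_def M_def
    by (simp add: matrix_vector_mult_diff_rdistrib matrix_vector_mul_mat)
  also have "\<dots> \<longleftrightarrow> det (M - mat \<mu>) = 0"
    by (metis invertible_det_nz invertible_left_inverse matrix_left_invertible_ker)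
  also have "det (M - mat \<mu>) = \<mu>^2 - of_real (trace A) * \<mu> + of_real (det A)"
    by (simp add: M_def det_2 trace_def sum_2 mat_def algebra_simps power2_eq_square)
  finally show ?thesis .
qed

lemma is_eigenvalue2_of_real_iff:
  "is_eigenvalue2 A (of_real m) \<longleftrightarrow> m^2 - trace A * m + det A = 0"
proof -
  have "(of_real m)^2 - of_real (trace A) * of_real m + of_real (det A)
      = (of_real (m^2 - trace A * m + det A) :: complex)"
    by simp
  then show ?thesis
    by (simp only: is_eigenvalue2_iff_char_poly of_real_eq_0_iff)
qed

lemma quadratic_root_Re_neg:
  fixes \<mu> :: complex
  assumes "t < 0" "d > 0" "\<mu>^2 - of_real t * \<mu> + of_real d = 0"
  shows "Re \<mu> < 0"
proof -
  have re: "(Re \<mu>)^2 - (Im \<mu>)^2 - t * Re \<mu> + d = 0"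
    using arg_cong [OF assms(3), of Re] by (simp add: power2_eq_square)
  have im: "(2 * Re \<mu> - t) * Im \<mu> = 0"
    using arg_cong [OF assms(3), of Im] by (simp add: power2_eq_square algebra_simps)
  show ?thesis
  proof (cases "Im \<mu> = 0")
    case True
    with re have "t * Re \<mu> = (Re \<mu>)^2 + d"
      by simp
    also have "\<dots> > 0"
      using assms(2) by (simp add: add_nonneg_pos)
    finally show ?thesis
      using assms(1) by (simp add: zero_less_mult_iff)
  next
    case False
    with im have "Re \<mu> = t / 2"
      by simp
    with assms(1) show ?thesis
      by simp
  qed
qed

lemma quadratic_roots_opposite_sign:
  fixes t d :: real
  assumes "d < 0"
  obtains m1 m2 where "m1 > 0" "m2 < 0" "m1^2 - t * m1 + d = 0" "m2^2 - t * m2 + d = 0"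
proof
  define s where "s = sqrt (t^2 - 4 * d)"
  have "0 \<le> t^2 - 4 * d"
    using assms zero_le_power2 [of t] by linarith
  then have s2: "s^2 = t^2 - 4 * d"
    unfolding s_def by simp
  have "\<bar>t\<bar> < s"
    unfolding s_def using assms by (simp add: real_less_rsqrt)
  then show "(t + s) / 2 > 0" "(t - s) / 2 < 0"
    by auto
  show "((t + s) / 2)^2 - t * ((t + s) / 2) + d = 0" "((t - s) / 2)^2 - t * ((t - s) / 2) + d = 0"
    using s2 by (simp_all add: power2_eq_square field_simps)
qed

lemma locally_stable_if_trace_neg_det_pos:
  assumes "is_equilibrium P Q x y" "trace (jac2 P Q x y) < 0" "det (jac2 P Q x y) > 0"
  shows "locally_stable P Q x y"
  using assms quadratic_root_Re_neg [of "trace (jac2 P Q x y)" "det (jac2 P Q x y)"]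
  unfolding locally_stable_def is_eigenvalue2_iff_char_poly by blast

lemma saddle_if_det_neg:
  assumes "is_equilibrium P Q x y" "det (jac2 P Q x y) < 0"
  shows "saddle P Q x y"
proof -
  obtain m1 m2 :: real where "m1 > 0" "m2 < 0"
    and "m1^2 - trace (jac2 P Q x y) * m1 + det (jac2 P Q x y) = 0"
    and "m2^2 - trace (jac2 P Q x y) * m2 + det (jac2 P Q x y) = 0"
    using quadratic_roots_opposite_sign assms(2) by blast
  with assms(1) show ?thesis
    unfolding saddle_def is_eigenvalue2_of_real_iff by blast
qed

lemma deriv_const_div_diff:
  fixes a c x :: real
  assumes "x \<noteq> a"
  shows "deriv (\<lambda>x. c / (a - x)) x = c / (a - x)^2"
proof (rule DERIV_imp_deriv)
  show "((\<lambda>x. c / (a - x)) has_real_derivative c / (a - x)^2) (at x)"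
    using assms by (auto intro!: derivative_eq_intros simp: power2_eq_square)
qed

lemma is_equilibrium_epidemic_iff:
  assumes "I \<noteq> 0"
  shows "is_equilibrium (\<lambda>I R. I * (f R * (1 - I - R) - k)) (\<lambda>I R. (k - 1) * I - R) I R
    \<longleftrightarrow> f R * (1 - I - R) = k \<and> R = (k - 1) * I"
  using assms unfolding is_equilibrium_def by auto

lemma jac2_epidemic:
  assumes "(f has_real_derivative f') (at R)"
  shows "jac2 (\<lambda>I R. I * (f R * (1 - I - R) - k)) (\<lambda>I R. (k - 1) * I - R) I R
    = vector [vector [f R * (1 - I - R) - k - I * f R, I * (f' * (1 - I - R) - f R)],
              vector [k - 1, -1]]"
proof -
  have "((\<lambda>s. s * (f R * (1 - s - R) - k))
      has_real_derivative f R * (1 - I - R) - k - I * f R) (at I)"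
    by (auto intro!: derivative_eq_intros simp: algebra_simps)
  moreover have "((\<lambda>s. I * (f s * (1 - I - s) - k))
      has_real_derivative I * (f' * (1 - I - R) - f R)) (at R)"
    using assms by (auto intro!: derivative_eq_intros simp: algebra_simps)
  moreover have "((\<lambda>s. (k - 1) * s - R) has_real_derivative k - 1) (at I)"
    by (auto intro!: derivative_eq_intros)
  moreover have "((\<lambda>s. (k - 1) * I - s) has_real_derivative -1) (at R)"
    by (auto intro!: derivative_eq_intros)
  ultimately show ?thesis
    unfolding jac2_def by (simp add: DERIV_imp_deriv)
qed

lemma jac2_epidemic_trace_det:
  assumes "(f has_real_derivative f') (at R)" and "f R * (1 - I - R) = k" and "f R \<noteq> 0"
  shows "trace (jac2 (\<lambda>I R. I * (f R * (1 - I - R) - k)) (\<lambda>I R. (k - 1) * I - R) I R)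
      = - I * f R - 1" (is "trace ?J = _")
    and "det (jac2 (\<lambda>I R. I * (f R * (1 - I - R) - k)) (\<lambda>I R. (k - 1) * I - R) I R)
      = I * k / f R * ((f R)^2 - (k - 1) * f')"
proof -
  have gap: "1 - I - R = k / f R"
    using assms(2,3) by (simp add: field_simps)
  show "trace ?J = - I * f R - 1" "det ?J = I * k / f R * ((f R)^2 - (k - 1) * f')"
    unfolding jac2_epidemic [OF assms(1)] gap using assms(3)
    by (simp_all add: trace_def sum_2 det_2 field_simps power2_eq_square)
qed

lemma deriv_g_at_endemic:
  fixes k F I R :: real
  assumes "k > 1" "F * (1 - I - R) = k" "R = (k - 1) * I"
  shows "deriv (\<lambda>R. (k - 1) / ((k - 1) / k - R)) R = F^2 / (k - 1)"
proof -
  have "F \<noteq> 0"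
    using assms by auto
  have "F * (1 - k * I) = k"
    using assms(2,3) by (simp add: algebra_simps)
  with \<open>F \<noteq> 0\<close> have "1 - k * I = k / F"
    by (simp add: field_simps)
  have "(k - 1) / k - R = (k - 1) / k * (1 - k * I)"
    using assms(1) unfolding assms(3) by (simp add: field_simps)
  also have "\<dots> = (k - 1) / F"
    using \<open>1 - k * I = k / F\<close> assms(1) by simp
  finally have "(k - 1) / k - R = (k - 1) / F" .
  with \<open>F \<noteq> 0\<close> show ?thesis
    using assms(1) by (simp add: deriv_const_div_diff power_divide power2_eq_square)
qed

theorem theorem3:
  fixes k :: real and f :: "real \<Rightarrow> real" and Is Rs :: real
  defines "g \<equiv> (\<lambda>R. (k - 1) / ((k - 1) / k - R))"
      and "P \<equiv> (\<lambda>I R. I * (f R * (1 - I - R) - k))"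
      and "Q \<equiv> (\<lambda>I R. (k - 1) * I - R)"
  assumes k: "k > 1"
      and fpos: "\<forall>x\<in>{0..1}. f x > 0"
      and fdiff: "f differentiable_on {0..1}"
      and eq: "is_equilibrium P Q Is Rs"
      and endemic: "Is > 0"
      and Rdom: "Rs \<in> {0..1}"
  shows "(deriv f Rs < deriv g Rs \<longrightarrow> locally_stable P Q Is Rs)
       \<and> (deriv f Rs > deriv g Rs \<longrightarrow> saddle P Q Is Rs)"
proof -
  have fR: "f Rs * (1 - Is - Rs) = k" and R: "Rs = (k - 1) * Is"
    using eq endemic is_equilibrium_epidemic_iff [where I = Is and R = Rs]
    unfolding P_def Q_def by blast+
  have "f Rs > 0"
    using fpos Rdom by blast
  with fR k have "1 - Is - Rs > 0"
    using zero_less_mult_pos [of "f Rs" "1 - Is - Rs"] by simp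
  with R k endemic have "Rs \<in> {0<..<1}"
    by simp
  moreover have "f differentiable_on {0<..<1}"
    using fdiff by (rule differentiable_on_subset) auto
  ultimately have "(f has_real_derivative deriv f Rs) (at Rs)"
    by (simp add: differentiable_on_eq_differentiable_at DERIV_deriv_iff_real_differentiable)
  from jac2_epidemic_trace_det [OF this fR] \<open>f Rs > 0\<close>
  have trace: "trace (jac2 P Q Is Rs) < 0"
    and det: "det (jac2 P Q Is Rs) = Is * k / f Rs * ((f Rs)^2 - (k - 1) * deriv f Rs)"
    using mult_pos_pos [OF endemic \<open>f Rs > 0\<close>] unfolding P_def Q_def by auto
  have "deriv g Rs = (f Rs)^2 / (k - 1)"
    unfolding g_def using deriv_g_at_endemic [OF k fR R] .
  then have "deriv f Rs < deriv g Rs \<longleftrightarrow> det (jac2 P Q Is Rs) > 0"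
    and "deriv f Rs > deriv g Rs \<longleftrightarrow> det (jac2 P Q Is Rs) < 0"
    unfolding det using k endemic \<open>f Rs > 0\<close>
    by (simp_all add: zero_less_mult_iff mult_less_0_iff pos_less_divide_eq pos_divide_less_eq
        mult.commute)
  then show ?thesis
    using eq trace locally_stable_if_trace_neg_det_pos saddle_if_det_neg by blast
qed

end
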